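(* Let $(L^+,L^-)$ be a pair of fully transverse prelaminations of $S^1$. Define $\bar L^\pm:=\{(a,a')\in S^1\times S^1: a\neq a',\ \exists (a_n,a_n')\in L^\pm \text{ converging to } (a,a')\}$. Then for any subsets $\hat L^+,\hat L^-$ with $L^\pm\subseteq\hat L^\pm\subseteq\bar L^\pm$, the pair $(\hat L^+,\hat L^-)$ is a pair of fully transverse prelaminations.
   Context: Pairs $\{a_1,a_2\},\{b_1,b_2\}$ of distinct points of $S^1$ cross if $a_1,a_2$ lie in different components of $S^1\setminus\{b_1,b_2\}$. A prelamination is a set of unordered pairs of distinct points of $S^1$ (leaves) no two of which cross; pairs in $\bar L^\pm$ are regarded as unordered. $(L^+,L^-)$ is fully transverse if $L^+\cap L^-=\emptyset$, the set of endpoints of leaves of $L^+\cup L^-$ is dense in $S^1$, and for any $\alpha,\beta\in L^+\cup L^-$ there is a sequence $\alpha=\alpha_1,\dots,\alpha_k=\beta$ of leaves of $L^+\cup L^-$ with $\alpha_i$ crossing $\alpha_{i+1}$. *)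

theory Defs
  imports "HOL-Analysis.Analysis"
begin

definition S1 :: "complex set" where
  "S1 = sphere 0 1"

text \<open>An unordered pair of distinct points of S^1 is represented as the two-element set.\<close>
definition is_pair :: "complex set \<Rightarrow> bool" where
  "is_pair \<alpha> \<longleftrightarrow> (\<exists>a b. \<alpha> = {a, b} \<and> a \<noteq> b \<and> a \<in> S1 \<and> b \<in> S1)"

definition crosses :: "complex set \<Rightarrow> complex set \<Rightarrow> bool" where
  "crosses \<alpha> \<beta> \<longleftrightarrow> is_pair \<alpha> \<and> is_pair \<beta> \<and>
     (\<exists>a1 a2. \<alpha> = {a1, a2} \<and> a1 \<in> S1 - \<beta> \<and> a2 \<in> S1 - \<beta> \<and>
        connected_component_set (S1 - \<beta>) a1 \<noteq> connected_component_set (S1 - \<beta>) a2)"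

definition prelamination :: "complex set set \<Rightarrow> bool" where
  "prelamination L \<longleftrightarrow> (\<forall>\<alpha>\<in>L. is_pair \<alpha>) \<and> (\<forall>\<alpha>\<in>L. \<forall>\<beta>\<in>L. \<not> crosses \<alpha> \<beta>)"

definition endpoints :: "complex set set \<Rightarrow> complex set" where
  "endpoints L = \<Union>L"

definition fully_transverse :: "complex set set \<Rightarrow> complex set set \<Rightarrow> bool" where
  "fully_transverse Lp Lm \<longleftrightarrow>
     Lp \<inter> Lm = {} \<and>
     S1 \<subseteq> closure (endpoints (Lp \<union> Lm)) \<and>
     (\<forall>\<alpha>\<in>Lp \<union> Lm. \<forall>\<beta>\<in>Lp \<union> Lm.
        \<exists>xs. xs \<noteq> [] \<and> hd xs = \<alpha> \<and> last xs = \<beta> \<and> set xs \<subseteq> Lp \<union> Lm \<and>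
          (\<forall>i. Suc i < length xs \<longrightarrow> crosses (xs ! i) (xs ! Suc i)))"

definition lam_closure :: "complex set set \<Rightarrow> complex set set" where
  "lam_closure L = {{a, a'} | a a'. a \<noteq> a' \<and>
      (\<exists>x y. (\<forall>n. {x n, y n} \<in> L) \<and> x \<longlonglongrightarrow> a \<and> y \<longlonglongrightarrow> a')}"

end

theory Submission
  imports Defs
begin

text \<open>Whether \<open>{a, a'}\<close> crosses \<open>{b, b'}\<close> is read off from the real function \<open>side b b'\<close>:
  the two components of \<open>S1 - {b, b'}\<close> are the open arcs on which its sign is constant, so
  the chords cross iff \<open>side b b' a * side b b' a' < 0\<close>. This makes crossing an open condition:
  a crossing between limits of leaves is already a crossing between leaves, so closures of
  prelaminations are prelaminations. Full transversality forces every chord to be crossed by some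
  leaf; hence no chord lies in both closures, and chains between new leaves are obtained by
  attaching a crossing leaf at each end.\<close>

(* Positive iff z lies strictly to the left of the line through b and b', oriented from b to b'. *)
definition side :: "complex \<Rightarrow> complex \<Rightarrow> complex \<Rightarrow> real" where
  "side b b' z = Im ((z - b) * cnj (b' - b))"

definition left_arc :: "complex \<Rightarrow> complex \<Rightarrow> complex set" where
  "left_arc b b' = {z \<in> S1. 0 < side b b' z}"

lemma S1_mult_cnj: "z \<in> S1 \<Longrightarrow> z * cnj z = 1"
  by (simp add: S1_def complex_mult_cnj cmod_def)

lemma closed_S1: "closed S1"
  by (simp add: S1_def)

lemma is_pair_doubleton_iff: "is_pair {x, y} \<longleftrightarrow> x \<noteq> y \<and> x \<in> S1 \<and> y \<in> S1"
  unfolding is_pair_def by (auto simp: doubleton_eq_iff)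

lemma is_pairE:
  assumes "is_pair \<alpha>"
  obtains a a' where "\<alpha> = {a, a'}" "a \<noteq> a'" "a \<in> S1" "a' \<in> S1"
  using assms unfolding is_pair_def by blast

lemma side_swap: "side b' b z = - side b b' z"
  by (simp add: side_def algebra_simps)

lemma side_self [simp]: "side b b' b = 0" "side b b' b' = 0"
  by (simp_all add: side_def algebra_simps)

lemma continuous_on_side: "continuous_on S (side b b')"
  unfolding side_def by (intro continuous_intros)

lemma tendsto_side:
  "u \<longlonglongrightarrow> b \<Longrightarrow> v \<longlonglongrightarrow> b' \<Longrightarrow> x \<longlonglongrightarrow> z \<Longrightarrow> (\<lambda>n. side (u n) (v n) (x n)) \<longlonglongrightarrow> side b b' z"
  unfolding side_def by (intro tendsto_intros)

lemma side_factorization: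
  assumes "b \<in> S1" "b' \<in> S1" "z \<in> S1"
  shows "2 * \<i> * of_real (side b b' z) * (b * b' * z) = (z - b) * (b - b') * (z - b')"
proof -
  have "2 * \<i> * of_real (side b b' z) = (z - b) * cnj (b' - b) - cnj ((z - b) * cnj (b' - b))"
    unfolding side_def complex_diff_cnj by simp
  then have "2 * \<i> * of_real (side b b' z) = (z - b) * (cnj b' - cnj b) - (cnj z - cnj b) * (b' - b)"
    by simp
  then show ?thesis using assms[THEN S1_mult_cnj] by algebra
qed

lemma side_eq_0_iff:
  assumes "b \<in> S1" "b' \<in> S1" "z \<in> S1" "b \<noteq> b'"
  shows "side b b' z = 0 \<longleftrightarrow> z = b \<or> z = b'"
  using side_factorization[OF assms(1-3)] assms by (auto simp: S1_def)

lemma side_product: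
  assumes "a \<in> S1" "a' \<in> S1" "b \<in> S1" "b' \<in> S1"
  shows "4 * of_real (side b b' a * side b b' a') * (a * a' * b * b')
    = (a - b) * (a - b') * (a' - b) * (a' - b') * of_real ((cmod (b - b'))\<^sup>2)"
proof -
  have chord: "(b - b')\<^sup>2 = - of_real ((cmod (b - b'))\<^sup>2) * (b * b')"
    unfolding complex_norm_square complex_cnj_diff using assms(3,4)[THEN S1_mult_cnj] by algebra
  have "(2 * \<i> * of_real (side b b' a) * (b * b' * a)) * (2 * \<i> * of_real (side b b' a') * (b * b' * a'))
      = ((a - b) * (b - b') * (a - b')) * ((a' - b) * (b - b') * (a' - b'))"
    by (simp only: side_factorization assms)
  then have "- 4 * of_real (side b b' a * side b b' a') * (a * a' * b * b') * (b * b')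
      = (a - b) * (a - b') * (a' - b) * (a' - b') * (b - b')\<^sup>2"
    by (simp add: power2_eq_square algebra_simps)
  then have "(4 * of_real (side b b' a * side b b' a') * (a * a' * b * b')) * (b * b')
      = ((a - b) * (a - b') * (a' - b) * (a' - b') * of_real ((cmod (b - b'))\<^sup>2)) * (b * b')"
    unfolding chord by (simp add: algebra_simps)
  moreover have "b * b' \<noteq> 0" using assms by (auto simp: S1_def)
  ultimately show ?thesis by simp
qed

lemma side_product_sym:
  assumes "a \<in> S1" "a' \<in> S1" "b \<in> S1" "b' \<in> S1"
  shows "side b b' a * side b b' a' * (cmod (a - a'))\<^sup>2 = side a a' b * side a a' b' * (cmod (b - b'))\<^sup>2"
proof -
  let ?p = "a * a' * b * b'"
  have "4 * of_real (side b b' a * side b b' a' * (cmod (a - a'))\<^sup>2) * ?p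
      = (a - b) * (a - b') * (a' - b) * (a' - b') * of_real ((cmod (b - b'))\<^sup>2) * of_real ((cmod (a - a'))\<^sup>2)"
    using side_product[OF assms] by (simp add: ac_simps)
  also have "\<dots> = (b - a) * (b - a') * (b' - a) * (b' - a') * of_real ((cmod (a - a'))\<^sup>2) * of_real ((cmod (b - b'))\<^sup>2)"
    by algebra
  also have "\<dots> = 4 * of_real (side a a' b * side a a' b' * (cmod (b - b'))\<^sup>2) * ?p"
    using side_product[OF assms(3,4,1,2)] by (simp add: ac_simps)
  finally show ?thesis using assms by (auto simp: S1_def simp del: of_real_mult)
qed

lemma side_polar:
  assumes "cmod b = 1"
  shows "side b (b * exp (\<i> * of_real a)) (b * exp (\<i> * of_real t))
    = 4 * sin (a/2) * sin (t/2) * sin ((t - a)/2)"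
proof -
  have "(b * exp (\<i> * of_real t) - b) * cnj (b * exp (\<i> * of_real a) - b)
     = (b * cnj b) * ((exp (\<i> * of_real t) - 1) * cnj (exp (\<i> * of_real a) - 1))"
    by (simp add: algebra_simps)
  moreover have "b * cnj b = 1" using assms by (simp add: complex_mult_cnj cmod_def)
  ultimately have "side b (b * exp (\<i> * of_real a)) (b * exp (\<i> * of_real t))
      = sin t * (cos a - 1) - sin a * (cos t - 1)"
    unfolding side_def by (simp add: exp_Euler cos_of_real sin_of_real)
  also have "\<dots> = 4 * sin (a/2) * sin (t/2) * sin ((t - a)/2)"
  proof -
    have "sin (2*x) * (cos (2*y) - 1) - sin (2*y) * (cos (2*x) - 1) = 4 * sin y * sin x * sin (x - y)"
      for x y :: real
      unfolding sin_double cos_double_sin sin_diff by (simp add: power2_eq_square algebra_simps)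
    from this[of "t/2" "a/2"] show ?thesis by (simp add: diff_divide_distrib)
  qed
  finally show ?thesis .
qed

lemma S1_polar:
  assumes "b \<in> S1" "z \<in> S1"
  obtains t where "0 \<le> t" "t < 2*pi" "z = b * exp (\<i> * of_real t)"
proof
  let ?t = "Arg2pi (z * cnj b)"
  show "0 \<le> ?t" "?t < 2*pi" using Arg2pi by auto
  have "cmod (z * cnj b) = 1" using assms by (simp add: S1_def norm_mult)
  then have "z * cnj b = exp (\<i> * of_real ?t)" using Arg2pi_eq[of "z * cnj b"] by simp
  then show "z = b * exp (\<i> * of_real ?t)"
    using S1_mult_cnj[OF assms(1)] by (metis mult.left_commute mult_1_right)
qed

lemma left_arc_eq_image:
  assumes "b \<in> S1" "b' \<in> S1" "b \<noteq> b'"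
  obtains a where "0 < a" "a < 2*pi" "b' = b * exp (\<i> * of_real a)"
    "left_arc b b' = (\<lambda>t. b * exp (\<i> * of_real t)) ` {a<..<2*pi}"
proof -
  let ?f = "\<lambda>t. b * exp (\<i> * of_real t)"
  have nb: "cmod b = 1" using assms by (simp add: S1_def)
  obtain a where a: "0 \<le> a" "a < 2*pi" "b' = ?f a" using S1_polar[OF assms(1,2)] .
  have "a \<noteq> 0" using a assms(3) by auto
  with a have a_pos: "0 < a" by simp
  have sin_a: "0 < sin (a/2)" using a_pos a by (intro sin_gt_zero) auto
  have "left_arc b b' = ?f ` {a<..<2*pi}"
  proof (intro equalityI subsetI)
    fix z assume z: "z \<in> left_arc b b'"
    then obtain t where t: "0 \<le> t" "t < 2*pi" "z = ?f t"
      using S1_polar[OF assms(1)] by (auto simp: left_arc_def)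
    have "a < t"
    proof (rule ccontr)
      assume "\<not> a < t"
      then have "0 \<le> sin ((a - t)/2)" using a t by (intro sin_ge_zero) auto
      moreover have "sin ((t - a)/2) = - sin ((a - t)/2)"
        by (metis minus_diff_eq minus_divide_left sin_minus)
      ultimately have "sin ((t - a)/2) \<le> 0" by simp
      moreover have "0 \<le> sin (t/2)" using t by (intro sin_ge_zero) auto
      ultimately have "side b b' z \<le> 0"
        using sin_a by (simp add: t(3) a(3) side_polar[OF nb] mult_nonneg_nonpos mult_nonneg_nonneg)
      then show False using z by (simp add: left_arc_def)
    qed
    then show "z \<in> ?f ` {a<..<2*pi}" using t by auto
  next
    fix z assume "z \<in> ?f ` {a<..<2*pi}"
    then obtain t where t: "a < t" "t < 2*pi" "z = ?f t" by auto
    have "0 < sin (t/2)" "0 < sin ((t - a)/2)" using t a by (auto intro!: sin_gt_zero)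
    then have "0 < side b b' z" using sin_a by (simp add: t(3) a(3) side_polar[OF nb])
    moreover have "z \<in> S1" using nb by (simp add: t(3) S1_def norm_mult)
    ultimately show "z \<in> left_arc b b'" by (simp add: left_arc_def)
  qed
  then show ?thesis using a_pos a that by blast
qed

lemma connected_left_arc:
  assumes "b \<in> S1" "b' \<in> S1"
  shows "connected (left_arc b b')"
proof (cases "b = b'")
  case True
  then have "left_arc b b' = {}" by (simp add: left_arc_def side_def)
  then show ?thesis by simp
next
  case False
  then obtain a where "left_arc b b' = (\<lambda>t. b * exp (\<i> * of_real t)) ` {a<..<2*pi}"
    using left_arc_eq_image[OF assms] by metis
  then show ?thesis by (auto intro!: connected_continuous_image continuous_intros)
qed

lemma nonneg_side_in_closure_left_arc:
  assumes "b \<in> S1" "b' \<in> S1" "b \<noteq> b'" "z \<in> S1" "0 \<le> side b b' z"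
  shows "z \<in> closure (left_arc b b')"
proof (cases "side b b' z = 0")
  case True
  let ?f = "\<lambda>t. b * exp (\<i> * of_real t)"
  obtain a where a: "0 < a" "a < 2*pi" "b' = ?f a" and arc: "left_arc b b' = ?f ` {a<..<2*pi}"
    using left_arc_eq_image[OF assms(1-3)] by metis
  have "?f ` closure {a<..<2*pi} \<subseteq> closure (left_arc b b')"
    unfolding arc by (rule image_closure_subset) (auto intro!: continuous_intros closure_subset)
  moreover have "a \<in> closure {a<..<2*pi}" "2*pi \<in> closure {a<..<2*pi}" using a by auto
  ultimately have "?f a \<in> closure (left_arc b b')" "?f (2*pi) \<in> closure (left_arc b b')"
    by (meson image_subset_iff)+
  moreover have "?f (2*pi) = b" by (simp add: exp_eq_1)
  moreover have "z = b \<or> z = b'" using True side_eq_0_iff assms by blast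
  ultimately show ?thesis using a(3) by auto
next
  case False
  with assms have "z \<in> left_arc b b'" by (simp add: left_arc_def)
  then show ?thesis using closure_subset by blast
qed

lemma left_arc_nonempty:
  assumes "b \<in> S1" "b' \<in> S1" "b \<noteq> b'"
  shows "left_arc b b' \<noteq> {}"
  using nonneg_side_in_closure_left_arc[OF assms(1-3) assms(1)] by auto

lemma connected_component_circle_minus_pair_iff:
  assumes "b \<in> S1" "b' \<in> S1" "b \<noteq> b'" "z \<in> S1 - {b, b'}" "w \<in> S1 - {b, b'}"
  shows "connected_component (S1 - {b, b'}) z w \<longleftrightarrow> 0 < side b b' z * side b b' w"
proof
  assume "connected_component (S1 - {b, b'}) z w"
  then obtain T where T: "connected T" "T \<subseteq> S1 - {b, b'}" "z \<in> T" "w \<in> T"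
    unfolding connected_component_def by blast
  have nonzero: "side b b' p \<noteq> 0" if "p \<in> T" for p
    using that T(2) side_eq_0_iff[OF assms(1,2) _ assms(3)] by auto
  have conn: "connected (side b b' ` T)"
    using continuous_on_side T(1) by (rule connected_continuous_image)
  show "0 < side b b' z * side b b' w"
  proof (rule ccontr)
    assume "\<not> ?thesis"
    with nonzero[OF T(3)] nonzero[OF T(4)]
    obtain x y where "x \<in> T" "y \<in> T" "side b b' x < 0" "0 < side b b' y"
      using T(3,4) by (metis linorder_neqE_linordered_idom mult_neg_neg mult_pos_pos)
    then show False
      using connectedD_interval[OF conn, of "side b b' x" "side b b' y" 0] nonzero by force
  qed
next
  assume pos: "0 < side b b' z * side b b' w"
  show "connected_component (S1 - {b, b'}) z w"
  proof (cases "0 < side b b' z")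
    case True
    with pos have "0 < side b b' w" by (simp add: zero_less_mult_iff)
    with True have "z \<in> left_arc b b'" "w \<in> left_arc b b'"
      using assms(4,5) by (simp_all add: left_arc_def)
    moreover have "left_arc b b' \<subseteq> S1 - {b, b'}" by (auto simp: left_arc_def)
    ultimately show ?thesis using connected_left_arc[OF assms(1,2)] by (intro connected_componentI)
  next
    case False
    with pos have "side b b' z < 0" "side b b' w < 0" by (auto simp: zero_less_mult_iff)
    then have "z \<in> left_arc b' b" "w \<in> left_arc b' b"
      using assms(4,5) by (simp_all add: left_arc_def side_swap[of b b'])
    moreover have "left_arc b' b \<subseteq> S1 - {b, b'}" by (auto simp: left_arc_def)
    ultimately show ?thesis using connected_left_arc[OF assms(2,1)] by (intro connected_componentI)
  qed
qed

lemma crosses_iff_side: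
  assumes "a \<noteq> a'" "a \<in> S1" "a' \<in> S1" "b \<noteq> b'" "b \<in> S1" "b' \<in> S1"
  shows "crosses {a, a'} {b, b'} \<longleftrightarrow> side b b' a * side b b' a' < 0"
proof
  assume "crosses {a, a'} {b, b'}"
  then obtain a1 a2 where A: "{a, a'} = {a1, a2}" "a1 \<in> S1 - {b, b'}" "a2 \<in> S1 - {b, b'}"
    "connected_component_set (S1 - {b, b'}) a1 \<noteq> connected_component_set (S1 - {b, b'}) a2"
    unfolding crosses_def by blast
  then have "\<not> 0 < side b b' a1 * side b b' a2"
    using connected_component_circle_minus_pair_iff[OF assms(5,6,4) A(2,3)] connected_component_eq
    by blast
  moreover have "side b b' a1 \<noteq> 0" "side b b' a2 \<noteq> 0"
    using A(2,3) side_eq_0_iff[OF assms(5,6) _ assms(4)] by auto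
  ultimately have "side b b' a1 * side b b' a2 < 0"
    by (simp add: zero_less_mult_iff mult_less_0_iff) linarith
  with A(1) show "side b b' a * side b b' a' < 0"
    by (auto simp: doubleton_eq_iff mult.commute)
next
  assume neg: "side b b' a * side b b' a' < 0"
  then have A: "a \<in> S1 - {b, b'}" "a' \<in> S1 - {b, b'}" using assms by auto
  with neg have "connected_component_set (S1 - {b, b'}) a \<noteq> connected_component_set (S1 - {b, b'}) a'"
    using connected_component_circle_minus_pair_iff[OF assms(5,6,4) A] connected_component_eq_eq
    by auto
  with A show "crosses {a, a'} {b, b'}"
    unfolding crosses_def using assms by (auto simp: is_pair_doubleton_iff)
qed

lemma crosses_is_pair:
  assumes "crosses \<alpha> \<beta>"
  shows "is_pair \<alpha>" "is_pair \<beta>"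
  using assms unfolding crosses_def by auto

lemma crosses_sym:
  assumes "crosses \<alpha> \<beta>"
  shows "crosses \<beta> \<alpha>"
proof -
  obtain a a' where A: "\<alpha> = {a, a'}" "a \<noteq> a'" "a \<in> S1" "a' \<in> S1"
    using crosses_is_pair(1)[OF assms] by (rule is_pairE)
  obtain b b' where B: "\<beta> = {b, b'}" "b \<noteq> b'" "b \<in> S1" "b' \<in> S1"
    using crosses_is_pair(2)[OF assms] by (rule is_pairE)
  have "side b b' a * side b b' a' < 0"
    using assms crosses_iff_side[OF A(2-4) B(2-4)] A(1) B(1) by simp
  then have "side b b' a * side b b' a' * (cmod (a - a'))\<^sup>2 < 0"
    using A(2) by (simp add: mult_neg_pos)
  then have "side a a' b * side a a' b' * (cmod (b - b'))\<^sup>2 < 0"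
    by (simp only: side_product_sym A(3,4) B(3,4))
  then have "side a a' b * side a a' b' < 0"
    by (simp add: mult_less_0_iff)
  then show ?thesis
    using crosses_iff_side[OF B(2-4) A(2-4)] A(1) B(1) by simp
qed

text \<open>\<open>\<gamma>\<close> together with the open arc on its side is connected and avoids \<open>\<delta>\<close>.\<close>
lemma not_crosses_if_opposite_sides:
  assumes "b \<in> S1" "b' \<in> S1" "b \<noteq> b'"
    and "\<forall>z\<in>\<gamma>. 0 \<le> side b b' z" "\<forall>z\<in>\<delta>. side b b' z \<le> 0"
  shows "\<not> crosses \<gamma> \<delta>"
proof
  assume "crosses \<gamma> \<delta>"
  then obtain g1 g2 where G: "\<gamma> = {g1, g2}" "g1 \<in> S1 - \<delta>" "g2 \<in> S1 - \<delta>"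
    "connected_component_set (S1 - \<delta>) g1 \<noteq> connected_component_set (S1 - \<delta>) g2"
    unfolding crosses_def by blast
  let ?T = "left_arc b b' \<union> {g1, g2}"
  have "left_arc b b' \<subseteq> S1 - \<delta>"
    using assms(5) by (force simp: left_arc_def)
  then have "?T \<subseteq> S1 - \<delta>" using G by auto
  moreover have "connected ?T"
  proof (rule connected_intermediate_closure)
    show "connected (left_arc b b')" using connected_left_arc[OF assms(1,2)] .
    show "?T \<subseteq> closure (left_arc b b')"
      using G assms(4) nonneg_side_in_closure_left_arc[OF assms(1-3)] closure_subset by auto
  qed auto
  ultimately have "connected_component (S1 - \<delta>) g1 g2"
    by (intro connected_componentI) auto
  then show False using G(4) connected_component_eq by blast
qed

lemma lam_closureE:
  assumes "\<alpha> \<in> lam_closure L" "\<forall>\<gamma>\<in>L. is_pair \<gamma>"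
  obtains a a' x y where "\<alpha> = {a, a'}" "a \<noteq> a'" "a \<in> S1" "a' \<in> S1"
    "\<forall>n. {x n, y n} \<in> L" "\<forall>n. x n \<noteq> y n \<and> x n \<in> S1 \<and> y n \<in> S1"
    "x \<longlonglongrightarrow> a" "y \<longlonglongrightarrow> a'"
proof -
  obtain a a' x y where A: "\<alpha> = {a, a'}" "a \<noteq> a'" "\<forall>n. {x n, y n} \<in> L"
    "x \<longlonglongrightarrow> a" "y \<longlonglongrightarrow> a'"
    using assms(1) unfolding lam_closure_def by blast
  have xy: "\<forall>n. x n \<noteq> y n \<and> x n \<in> S1 \<and> y n \<in> S1"
    using A(3) assms(2) is_pair_doubleton_iff by blast
  have "a \<in> S1" "a' \<in> S1"
    using closed_sequentially[OF closed_S1] xy A(4,5) by blast+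
  with A xy show ?thesis using that by blast
qed

lemma is_pair_lam_closure:
  "\<alpha> \<in> lam_closure L \<Longrightarrow> \<forall>\<gamma>\<in>L. is_pair \<gamma> \<Longrightarrow> is_pair \<alpha>"
  by (erule lam_closureE) (auto simp: is_pair_doubleton_iff)

lemma subset_lam_closure:
  assumes "\<forall>\<gamma>\<in>L. is_pair \<gamma>"
  shows "L \<subseteq> lam_closure L"
proof
  fix \<gamma> assume "\<gamma> \<in> L"
  moreover obtain a a' where "\<gamma> = {a, a'}" "a \<noteq> a'"
    using assms \<open>\<gamma> \<in> L\<close> is_pairE by metis
  ultimately have "\<gamma> = {a, a'} \<and> a \<noteq> a' \<and> (\<exists>x y. (\<forall>n. {x n, y n} \<in> L) \<and> x \<longlonglongrightarrow> a \<and> y \<longlonglongrightarrow> a')"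
    by (intro conjI exI[of _ "\<lambda>_. a"] exI[of _ "\<lambda>_. a'"]) simp_all
  then show "\<gamma> \<in> lam_closure L"
    unfolding lam_closure_def by blast
qed

lemma crosses_lam_closure:
  assumes "\<alpha> \<in> lam_closure L1" "\<beta> \<in> lam_closure L2"
    and "\<forall>\<gamma>\<in>L1. is_pair \<gamma>" "\<forall>\<gamma>\<in>L2. is_pair \<gamma>" "crosses \<alpha> \<beta>"
  shows "\<exists>\<alpha>'\<in>L1. \<exists>\<beta>'\<in>L2. crosses \<alpha>' \<beta>'"
proof -
  obtain a a' x y where A: "\<alpha> = {a, a'}" "a \<noteq> a'" "a \<in> S1" "a' \<in> S1"
    "\<forall>n. {x n, y n} \<in> L1" "\<forall>n. x n \<noteq> y n \<and> x n \<in> S1 \<and> y n \<in> S1"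
    "x \<longlonglongrightarrow> a" "y \<longlonglongrightarrow> a'"
    using assms(1,3) by (rule lam_closureE)
  obtain b b' u v where B: "\<beta> = {b, b'}" "b \<noteq> b'" "b \<in> S1" "b' \<in> S1"
    "\<forall>n. {u n, v n} \<in> L2" "\<forall>n. u n \<noteq> v n \<and> u n \<in> S1 \<and> v n \<in> S1"
    "u \<longlonglongrightarrow> b" "v \<longlonglongrightarrow> b'"
    using assms(2,4) by (rule lam_closureE)
  have "side b b' a * side b b' a' < 0"
    using crosses_iff_side[OF A(2-4) B(2-4)] assms(5) A(1) B(1) by simp
  moreover have "(\<lambda>n. side (u n) (v n) (x n) * side (u n) (v n) (y n)) \<longlonglongrightarrow> side b b' a * side b b' a'"
    by (intro tendsto_mult tendsto_side A B)
  ultimately have "eventually (\<lambda>n. side (u n) (v n) (x n) * side (u n) (v n) (y n) < 0) sequentially"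
    by (simp add: order_tendstoD(2))
  then obtain n where "side (u n) (v n) (x n) * side (u n) (v n) (y n) < 0"
    by (auto simp: eventually_sequentially)
  then have "crosses {x n, y n} {u n, v n}"
    using crosses_iff_side A(6) B(6) by simp
  then show ?thesis using A(5) B(5) by blast
qed

lemma prelamination_lam_closure:
  assumes "prelamination L" "H \<subseteq> lam_closure L"
  shows "prelamination H"
proof -
  have pairs: "\<forall>\<gamma>\<in>L. is_pair \<gamma>" using assms(1) by (simp add: prelamination_def)
  then have "\<forall>\<alpha>\<in>H. is_pair \<alpha>" using assms(2) is_pair_lam_closure by blast
  moreover have "\<not> crosses \<alpha> \<beta>" if "\<alpha> \<in> H" "\<beta> \<in> H" for \<alpha> \<beta>
    using crosses_lam_closure[of \<alpha> L \<beta> L] that pairs assms by (auto simp: prelamination_def)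
  ultimately show ?thesis by (simp add: prelamination_def)
qed

lemma not_crosses_lam_closure:
  assumes "prelamination L" "\<gamma> \<in> L" "\<alpha> \<in> lam_closure L"
  shows "\<not> crosses \<gamma> \<alpha>"
proof -
  have "\<forall>\<gamma>\<in>L. is_pair \<gamma>" using assms(1) by (simp add: prelamination_def)
  then have "prelamination (insert \<alpha> L)"
    using assms subset_lam_closure by (intro prelamination_lam_closure[OF assms(1)]) auto
  then show ?thesis using assms(2) by (simp add: prelamination_def)
qed

lemma fully_transverse_chain:
  assumes "fully_transverse Lp Lm" "\<alpha> \<in> Lp \<union> Lm" "\<beta> \<in> Lp \<union> Lm"
  obtains xs where "xs \<noteq> []" "hd xs = \<alpha>" "last xs = \<beta>" "set xs \<subseteq> Lp \<union> Lm"
    "successively crosses xs"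
proof -
  have "\<forall>\<alpha>\<in>Lp \<union> Lm. \<forall>\<beta>\<in>Lp \<union> Lm. \<exists>xs. xs \<noteq> [] \<and> hd xs = \<alpha> \<and> last xs = \<beta> \<and>
      set xs \<subseteq> Lp \<union> Lm \<and> successively crosses xs"
    using assms(1) unfolding fully_transverse_def successively_conv_nth by (elim conjE)
  with assms(2,3) that show ?thesis by blast
qed

lemma fully_transverseI:
  assumes "Lp \<inter> Lm = {}" "S1 \<subseteq> closure (endpoints (Lp \<union> Lm))"
    and "\<And>\<alpha> \<beta>. \<alpha> \<in> Lp \<union> Lm \<Longrightarrow> \<beta> \<in> Lp \<union> Lm \<Longrightarrow>
      \<exists>xs. xs \<noteq> [] \<and> hd xs = \<alpha> \<and> last xs = \<beta> \<and> set xs \<subseteq> Lp \<union> Lm \<and> successively crosses xs"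
  shows "fully_transverse Lp Lm"
  using assms unfolding fully_transverse_def successively_conv_nth by (intro conjI ballI)

lemma successively_switch:
  assumes "successively R xs" "xs \<noteq> []" "P (hd xs)" "\<not> P (last xs)"
  shows "\<exists>x\<in>set xs. \<exists>y\<in>set xs. R x y \<and> P x \<and> \<not> P y"
  using assms
proof (induction xs)
  case Nil
  then show ?case by simp
next
  case (Cons x ys)
  then have "ys \<noteq> []" by auto
  then have "R x (hd ys)" "successively R ys" "\<not> P (last ys)"
    using Cons.prems by (simp_all add: successively_Cons)
  then show ?case
    using Cons.IH \<open>ys \<noteq> []\<close> Cons.prems(3) by (cases "P (hd ys)") auto
qed

lemma successively_Cons_snoc:
  "xs \<noteq> [] \<Longrightarrow> successively R xs \<Longrightarrow> R x (hd xs) \<Longrightarrow> R (last xs) y \<Longrightarrow> successively R (x # xs @ [y])"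
  by (simp add: successively_Cons successively_append_iff)

lemma dense_meets_left_arc:
  assumes "S1 \<subseteq> closure E" "b \<in> S1" "b' \<in> S1" "b \<noteq> b'"
  shows "\<exists>e\<in>E. 0 < side b b' e"
proof -
  have "open {z. 0 < side b b' z}"
    using open_Collect_less[of "\<lambda>_. 0" "side b b'"] continuous_on_side by simp
  moreover have "{z. 0 < side b b' z} \<inter> closure E \<noteq> {}"
    using left_arc_nonempty[OF assms(2-4)] assms(1) by (auto simp: left_arc_def)
  ultimately show ?thesis by (auto simp: open_Int_closure_eq_empty)
qed

text \<open>If no leaf crossed the pair \<open>{a, a'}\<close>, every leaf would lie on one closed side of it,
  and by density both sides contain leaves; a chain of crossings joining them would have to
  cross from one closed side to the other.\<close>
lemma fully_transverse_crosses_pair: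
  assumes "fully_transverse Lp Lm" "\<forall>\<gamma>\<in>Lp \<union> Lm. is_pair \<gamma>" "is_pair \<alpha>"
  shows "\<exists>\<gamma>\<in>Lp \<union> Lm. crosses \<gamma> \<alpha>"
proof (rule ccontr)
  assume no_cross: "\<not> ?thesis"
  obtain a a' where A: "\<alpha> = {a, a'}" "a \<noteq> a'" "a \<in> S1" "a' \<in> S1"
    using assms(3) by (rule is_pairE)
  define upper where "upper \<gamma> \<longleftrightarrow> (\<forall>z\<in>\<gamma>. 0 \<le> side a a' z)" for \<gamma>
  have lower: "\<forall>z\<in>\<gamma>. side a a' z \<le> 0" if "\<gamma> \<in> Lp \<union> Lm" "\<not> upper \<gamma>" for \<gamma>
  proof -
    have "is_pair \<gamma>" using assms(2) that(1) by blast
    then obtain g g' where G: "\<gamma> = {g, g'}" "g \<noteq> g'" "g \<in> S1" "g' \<in> S1"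
      by (rule is_pairE)
    have "\<not> side a a' g * side a a' g' < 0"
      using no_cross that(1) crosses_iff_side[OF G(2-4) A(2-4)] G(1) A(1) by auto
    then show ?thesis using that(2) G(1) by (auto simp: upper_def mult_less_0_iff)
  qed
  have dense: "S1 \<subseteq> closure (\<Union>(Lp \<union> Lm))"
    using assms(1) by (simp add: fully_transverse_def endpoints_def)
  obtain \<delta>1 e1 where \<delta>1: "\<delta>1 \<in> Lp \<union> Lm" "e1 \<in> \<delta>1" "0 < side a a' e1"
    using dense_meets_left_arc[OF dense A(3,4,2)] by blast
  obtain \<delta>2 e2 where \<delta>2: "\<delta>2 \<in> Lp \<union> Lm" "e2 \<in> \<delta>2" "0 < side a' a e2"
    using dense_meets_left_arc[OF dense A(4,3) A(2)[symmetric]] by blast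
  obtain xs where xs: "xs \<noteq> []" "hd xs = \<delta>1" "last xs = \<delta>2" "set xs \<subseteq> Lp \<union> Lm"
    "successively crosses xs"
    using assms(1) \<delta>1(1) \<delta>2(1) by (rule fully_transverse_chain)
  have "upper \<delta>1" using lower[OF \<delta>1(1)] \<delta>1(2,3) by fastforce
  moreover have "\<not> upper \<delta>2" using \<delta>2(2,3) by (force simp: upper_def side_swap[of a a'])
  ultimately have "\<exists>\<gamma>\<in>set xs. \<exists>\<delta>\<in>set xs. crosses \<gamma> \<delta> \<and> upper \<gamma> \<and> \<not> upper \<delta>"
    using successively_switch[OF xs(5,1), of upper] xs(2,3) by simp
  then obtain \<gamma> \<delta> where \<gamma>\<delta>: "\<delta> \<in> Lp \<union> Lm" "crosses \<gamma> \<delta>" "upper \<gamma>" "\<not> upper \<delta>"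
    using xs(4) by blast
  have "\<not> crosses \<gamma> \<delta>"
    using \<gamma>\<delta>(3)[unfolded upper_def] lower[OF \<gamma>\<delta>(1,4)]
    by (rule not_crosses_if_opposite_sides[OF A(3,4,2)])
  with \<gamma>\<delta>(2) show False by contradiction
qed

lemma fully_transverse_enlarge:
  assumes "fully_transverse Lp Lm" "Lp \<subseteq> Hp" "Lm \<subseteq> Hm" "Hp \<inter> Hm = {}"
    and "\<forall>\<alpha>\<in>Hp \<union> Hm. \<exists>\<gamma>\<in>Lp \<union> Lm. crosses \<gamma> \<alpha>"
  shows "fully_transverse Hp Hm"
proof (rule fully_transverseI)
  show "Hp \<inter> Hm = {}" by (fact assms(4))
  have "S1 \<subseteq> closure (endpoints (Lp \<union> Lm))"
    using assms(1) by (simp add: fully_transverse_def)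
  also have "\<dots> \<subseteq> closure (endpoints (Hp \<union> Hm))"
    using assms(2,3) unfolding endpoints_def by (intro closure_mono) blast
  finally show "S1 \<subseteq> closure (endpoints (Hp \<union> Hm))" .
next
  fix \<alpha> \<beta> assume \<alpha>\<beta>: "\<alpha> \<in> Hp \<union> Hm" "\<beta> \<in> Hp \<union> Hm"
  obtain \<gamma> \<delta> where \<gamma>: "\<gamma> \<in> Lp \<union> Lm" "crosses \<gamma> \<alpha>" and \<delta>: "\<delta> \<in> Lp \<union> Lm" "crosses \<delta> \<beta>"
    using assms(5) \<alpha>\<beta> by blast
  obtain ys where ys: "ys \<noteq> []" "hd ys = \<gamma>" "last ys = \<delta>" "set ys \<subseteq> Lp \<union> Lm"
    "successively crosses ys"
    using assms(1) \<gamma>(1) \<delta>(1) by (rule fully_transverse_chain)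
  have "successively crosses (\<alpha> # ys @ [\<beta>])"
    using ys(1,5) crosses_sym[OF \<gamma>(2)] \<delta>(2) unfolding ys(2,3)[symmetric]
    by (rule successively_Cons_snoc)
  then show "\<exists>xs. xs \<noteq> [] \<and> hd xs = \<alpha> \<and> last xs = \<beta> \<and> set xs \<subseteq> Hp \<union> Hm \<and> successively crosses xs"
    using \<alpha>\<beta> ys(4) assms(2,3) by (intro exI[of _ "\<alpha> # ys @ [\<beta>]"]) auto
qed

theorem lemma3p15:
  assumes "prelamination Lp" and "prelamination Lm"
    and "fully_transverse Lp Lm"
    and "Lp \<subseteq> Hp" and "Hp \<subseteq> lam_closure Lp"
    and "Lm \<subseteq> Hm" and "Hm \<subseteq> lam_closure Lm"
  shows "prelamination Hp \<and> prelamination Hm \<and> fully_transverse Hp Hm"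
proof -
  have pairs: "\<forall>\<gamma>\<in>Lp \<union> Lm. is_pair \<gamma>"
    using assms(1,2) by (auto simp: prelamination_def)
  have Hp: "prelamination Hp" and Hm: "prelamination Hm"
    using prelamination_lam_closure assms by blast+
  then have crossed: "\<forall>\<alpha>\<in>Hp \<union> Hm. \<exists>\<gamma>\<in>Lp \<union> Lm. crosses \<gamma> \<alpha>"
    using fully_transverse_crosses_pair[OF assms(3) pairs] by (auto simp: prelamination_def)
  have "Hp \<inter> Hm = {}"
  proof (intro equals0I)
    fix \<alpha> assume \<alpha>: "\<alpha> \<in> Hp \<inter> Hm"
    then obtain \<gamma> where "\<gamma> \<in> Lp \<union> Lm" "crosses \<gamma> \<alpha>" using crossed by blast
    moreover have "\<alpha> \<in> lam_closure Lp" "\<alpha> \<in> lam_closure Lm" using \<alpha> assms(5,7) by auto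
    ultimately show False using not_crosses_lam_closure assms(1,2) by blast
  qed
  with Hp Hm crossed show ?thesis
    using fully_transverse_enlarge[OF assms(3,4,6)] by simp
qed

end
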